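(* Let $f$ be a Boolean function, let $a$ be a truth assignment to a superset of $var(f)$, let $x\in var(f)$, and let $\ell\in\{x,\overline{x}\}$ be the literal on $x$ satisfied by $a$. Then $$\textit{SR}(f,a)=\{t\wedge\ell\mid t\in\textit{SR}(f|\ell,a),\ t\not\models f|\overline{\ell}\}\ \cup\ \textit{SR}(f|\overline{x}\wedge f|x,\,a).$$
   Context: A term is a conjunction of literals; $t$ is an implicant of $f$ if $t\models f$, and a prime implicant if no term obtained from $t$ by deleting one literal is an implicant of $f$. $var(f)$ is the set of variables of $f$. For a literal $\ell$ on $x$, $f|\ell$ is the Boolean function over $var(f)\setminus\{x\}$ obtained by fixing $x$ so that $\ell$ is true. For a Boolean function $f$ and an assignment $a$ to a superset of $var(f)$, $\textit{SR}(f,a)$ denotes the set of prime implicants of $f$ that are satisfied by $a$ (the sufficient reasons for $a$ given $f$ when $a$ satisfies $f$). *)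

theory Defs
  imports Main
begin

text \<open>A truth assignment is a total function 'v => bool
  (an assignment to any superset of var(f) extends to one). A Boolean function is a
  predicate on assignments; its variable set var(f) is a finite set V on which it depends.\<close>

type_synonym 'v assignment = "'v \<Rightarrow> bool"
type_synonym 'v boolfun = "'v assignment \<Rightarrow> bool"

text \<open>A literal on variable v: (v, True) is v, (v, False) is its negation.\<close>
type_synonym 'v literal = "'v \<times> bool"

type_synonym 'v bterm = "'v literal set"

definition depends_only :: "'v boolfun \<Rightarrow> 'v set \<Rightarrow> bool" where
  "depends_only f V \<longleftrightarrow> (\<forall>a b. (\<forall>v\<in>V. a v = b v) \<longrightarrow> f a = f b)"

definition lit_neg :: "'v literal \<Rightarrow> 'v literal" where
  "lit_neg l = (fst l, \<not> snd l)"

definition sat_lit :: "'v assignment \<Rightarrow> 'v literal \<Rightarrow> bool" where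
  "sat_lit a l \<longleftrightarrow> a (fst l) = snd l"

definition sat_term :: "'v assignment \<Rightarrow> 'v bterm \<Rightarrow> bool" where
  "sat_term a t \<longleftrightarrow> (\<forall>l\<in>t. sat_lit a l)"

definition implicant :: "'v bterm \<Rightarrow> 'v boolfun \<Rightarrow> bool" where
  "implicant t f \<longleftrightarrow> (\<forall>b. sat_term b t \<longrightarrow> f b)"

definition prime_implicant :: "'v bterm \<Rightarrow> 'v boolfun \<Rightarrow> bool" where
  "prime_implicant t f \<longleftrightarrow> finite t \<and> implicant t f \<and> (\<forall>l\<in>t. \<not> implicant (t - {l}) f)"

text \<open>Conditioning f|l: fix the variable of l so that l is true.\<close>
definition cond :: "'v boolfun \<Rightarrow> 'v literal \<Rightarrow> 'v boolfun" where
  "cond f l = (\<lambda>b. f (b(fst l := snd l)))"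

definition SR :: "'v boolfun \<Rightarrow> 'v assignment \<Rightarrow> 'v bterm set" where
  "SR f a = {t. prime_implicant t f \<and> sat_term a t}"

end

theory Submission
  imports Defs
begin

text \<open>Let \<open>l\<close> be the literal on \<open>x\<close> satisfied by \<open>a\<close>. A prime implicant satisfied by \<open>a\<close>
  contains no literal on \<open>x\<close> other than \<open>l\<close>. A term \<open>u\<close> free of \<open>x\<close> implies \<open>f\<close> iff it implies
  both \<open>f|x\<close> and \<open>f|\<not>x\<close>, and \<open>l \<and> u\<close> implies \<open>f\<close> iff \<open>u\<close> implies \<open>f|l\<close>. Hence \<open>l \<and> u\<close> is prime
  for \<open>f\<close> iff \<open>u\<close> is prime for \<open>f|l\<close> and does not imply \<open>f|\<not>l\<close> (otherwise \<open>l\<close> could be dropped),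
  and the prime implicants of \<open>f\<close> free of \<open>x\<close> are exactly those of \<open>f|\<not>x \<and> f|x\<close>, which never
  mention \<open>x\<close>.\<close>

lemma sat_term_fun_upd_var_free:
  assumes "x \<notin> fst ` t"
  shows "sat_term (b(x := v)) t = sat_term b t"
  using assms unfolding sat_term_def sat_lit_def by force

lemma sat_term_insert: "sat_term b (insert l t) \<longleftrightarrow> sat_lit b l \<and> sat_term b t"
  by (simp add: sat_term_def)

lemma var_notin_diff_sat_lit:
  assumes "sat_term a t" and "sat_lit a (x, s)"
  shows "x \<notin> fst ` (t - {(x, s)})"
  using assms unfolding sat_term_def sat_lit_def by force

lemma implicant_conj_iff:
  "implicant t (\<lambda>b. g b \<and> h b) \<longleftrightarrow> implicant t g \<and> implicant t h"
  unfolding implicant_def by blast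

lemma implicant_insert_iff_implicant_cond:
  assumes "x \<notin> fst ` t"
  shows "implicant (insert (x, v) t) f \<longleftrightarrow> implicant t (cond f (x, v))"
proof
  assume imp: "implicant (insert (x, v) t) f"
  show "implicant t (cond f (x, v))"
    unfolding implicant_def
  proof (intro allI impI)
    fix b assume "sat_term b t"
    then have "sat_term (b(x := v)) t" using sat_term_fun_upd_var_free[OF assms] by blast
    then have "sat_term (b(x := v)) (insert (x, v) t)" by (simp add: sat_term_insert sat_lit_def)
    with imp show "cond f (x, v) b" unfolding implicant_def cond_def by simp
  qed
next
  assume imp: "implicant t (cond f (x, v))"
  show "implicant (insert (x, v) t) f"
    unfolding implicant_def
  proof (intro allI impI)
    fix b assume "sat_term b (insert (x, v) t)"
    then have "b x = v" and "sat_term b t" by (simp_all add: sat_term_insert sat_lit_def)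
    with imp have "f (b(x := v))" unfolding implicant_def cond_def by simp
    with \<open>b x = v\<close> show "f b" by (simp add: fun_upd_idem)
  qed
qed

lemma implicant_iff_implicant_both_conds:
  assumes "x \<notin> fst ` t"
  shows "implicant t f \<longleftrightarrow> implicant t (cond f (x, False)) \<and> implicant t (cond f (x, True))"
proof
  assume imp: "implicant t f"
  have "implicant t (cond f (x, v))" for v
    unfolding implicant_def
  proof (intro allI impI)
    fix b assume "sat_term b t"
    then have "sat_term (b(x := v)) t" using sat_term_fun_upd_var_free[OF assms] by blast
    with imp show "cond f (x, v) b" unfolding implicant_def cond_def by simp
  qed
  then show "implicant t (cond f (x, False)) \<and> implicant t (cond f (x, True))" by blast
next
  assume "implicant t (cond f (x, False)) \<and> implicant t (cond f (x, True))"
  then have "sat_term b t \<Longrightarrow> f (b(x := b x))" for b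
    by (cases "b x") (auto simp: implicant_def cond_def)
  then show "implicant t f" by (simp add: implicant_def)
qed

lemma depends_only_conj:
  "depends_only g V \<Longrightarrow> depends_only h V \<Longrightarrow> depends_only (\<lambda>b. g b \<and> h b) V"
  unfolding depends_only_def by blast

lemma depends_only_cond: "depends_only (cond f (x, v)) (- {x})"
  unfolding depends_only_def cond_def
proof (intro allI impI)
  fix a b :: "'a assignment"
  assume "\<forall>y\<in>- {x}. a y = b y"
  then have "a(x := v) = b(x := v)" by (simp add: fun_eq_iff)
  then show "f (a(fst (x, v) := snd (x, v))) = f (b(fst (x, v) := snd (x, v)))" by simp
qed

lemma cond_eq_if_depends_only_compl:
  assumes "depends_only g (- {x})"
  shows "cond g (x, v) = g"
proof
  fix b
  have "\<forall>y\<in>- {x}. (b(x := v)) y = b y" by simp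
  with assms show "cond g (x, v) b = g b" by (simp add: cond_def depends_only_def)
qed

text \<open>Satisfiability by \<open>a\<close> matters: \<open>{x, \<not>x}\<close> is a prime implicant of the constant false.\<close>

lemma prime_implicant_var_free:
  assumes prime: "prime_implicant t g" and "sat_term a t" and indep: "depends_only g (- {x})"
  shows "x \<notin> fst ` t"
proof
  assume "x \<in> fst ` t"
  then obtain v where xv: "(x, v) \<in> t" by force
  with \<open>sat_term a t\<close> have "sat_lit a (x, v)" by (simp add: sat_term_def)
  with \<open>sat_term a t\<close> have free: "x \<notin> fst ` (t - {(x, v)})" by (rule var_notin_diff_sat_lit)
  from xv have "insert (x, v) (t - {(x, v)}) = t" by blast
  with prime have "implicant (insert (x, v) (t - {(x, v)})) g"
    by (simp add: prime_implicant_def)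
  then have "implicant (t - {(x, v)}) (cond g (x, v))"
    using implicant_insert_iff_implicant_cond[OF free] by blast
  then have "implicant (t - {(x, v)}) g"
    using cond_eq_if_depends_only_compl[OF indep] by simp
  with prime xv show False by (simp add: prime_implicant_def)
qed

lemma prime_implicant_insert_iff:
  assumes free: "x \<notin> fst ` u"
  shows "prime_implicant (insert (x, s) u) f \<longleftrightarrow>
    prime_implicant u (cond f (x, s)) \<and> \<not> implicant u (cond f (x, \<not> s))"
proof -
  have notin: "(x, s) \<notin> u" using free by force
  have drop_lit: "implicant (insert (x, s) u - {(x, s)}) f \<longleftrightarrow>
      implicant u (cond f (x, s)) \<and> implicant u (cond f (x, \<not> s))"
  proof -
    have "insert (x, s) u - {(x, s)} = u" using notin by simp
    with implicant_iff_implicant_both_conds[OF free, of f] show ?thesis by (cases s) auto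
  qed
  have drop_other: "implicant (insert (x, s) u - {m}) f \<longleftrightarrow> implicant (u - {m}) (cond f (x, s))"
    if "m \<in> u" for m
  proof -
    have "insert (x, s) u - {m} = insert (x, s) (u - {m})" using that notin by blast
    moreover have "x \<notin> fst ` (u - {m})" using free by blast
    ultimately show ?thesis by (simp add: implicant_insert_iff_implicant_cond)
  qed
  have "prime_implicant (insert (x, s) u) f \<longleftrightarrow> finite u \<and> implicant u (cond f (x, s)) \<and>
      \<not> implicant (insert (x, s) u - {(x, s)}) f \<and>
      (\<forall>m\<in>u. \<not> implicant (insert (x, s) u - {m}) f)"
    unfolding prime_implicant_def implicant_insert_iff_implicant_cond[OF free] by simp
  also have "\<dots> \<longleftrightarrow> prime_implicant u (cond f (x, s)) \<and> \<not> implicant u (cond f (x, \<not> s))"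
    unfolding prime_implicant_def drop_lit using drop_other by auto
  finally show ?thesis .
qed

lemma prime_implicant_iff_prime_implicant_forall:
  assumes free: "x \<notin> fst ` t"
  shows "prime_implicant t (\<lambda>b. cond f (x, False) b \<and> cond f (x, True) b) \<longleftrightarrow>
    prime_implicant t f"
proof -
  have same_implicant: "implicant w (\<lambda>b. cond f (x, False) b \<and> cond f (x, True) b) \<longleftrightarrow>
      implicant w f" if "w \<subseteq> t" for w
  proof -
    have "x \<notin> fst ` w" using free that by blast
    then show ?thesis by (simp add: implicant_conj_iff implicant_iff_implicant_both_conds[of x w f])
  qed
  show ?thesis
    unfolding prime_implicant_def by (simp add: same_implicant)
qed

lemma SR_with_lit:
  assumes "sat_lit a (x, s)"
  shows "{t \<in> SR f a. (x, s) \<in> t} =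
    {insert (x, s) u | u. u \<in> SR (cond f (x, s)) a \<and> \<not> implicant u (cond f (x, \<not> s))}"
proof (intro set_eqI iffI)
  fix t assume "t \<in> {t \<in> SR f a. (x, s) \<in> t}"
  then have prime: "prime_implicant t f" and sat: "sat_term a t" and lit: "(x, s) \<in> t"
    by (auto simp: SR_def)
  define u where "u = t - {(x, s)}"
  have free: "x \<notin> fst ` u" unfolding u_def using sat assms by (rule var_notin_diff_sat_lit)
  have t: "t = insert (x, s) u" using lit by (auto simp: u_def)
  have "sat_term a u" using sat by (simp add: u_def sat_term_def)
  with prime show "t \<in> {insert (x, s) u | u. u \<in> SR (cond f (x, s)) a
      \<and> \<not> implicant u (cond f (x, \<not> s))}"
    using prime_implicant_insert_iff[OF free] t by (auto simp: SR_def)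
next
  fix t assume "t \<in> {insert (x, s) u | u. u \<in> SR (cond f (x, s)) a
      \<and> \<not> implicant u (cond f (x, \<not> s))}"
  then obtain u where t: "t = insert (x, s) u" and prime: "prime_implicant u (cond f (x, s))"
    and sat: "sat_term a u" and not_neg: "\<not> implicant u (cond f (x, \<not> s))"
    by (auto simp: SR_def)
  have free: "x \<notin> fst ` u" using prime sat depends_only_cond by (rule prime_implicant_var_free)
  show "t \<in> {t \<in> SR f a. (x, s) \<in> t}"
    using prime_implicant_insert_iff[OF free] prime not_neg sat assms t
    by (simp add: SR_def sat_term_def)
qed

lemma SR_without_lit:
  assumes "sat_lit a (x, s)"
  shows "{t \<in> SR f a. (x, s) \<notin> t} = SR (\<lambda>b. cond f (x, False) b \<and> cond f (x, True) b) a"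
proof (intro set_eqI iffI)
  fix t assume "t \<in> {t \<in> SR f a. (x, s) \<notin> t}"
  then have prime: "prime_implicant t f" and sat: "sat_term a t" and "(x, s) \<notin> t"
    by (auto simp: SR_def)
  then have free: "x \<notin> fst ` t" using var_notin_diff_sat_lit[OF sat assms] by simp
  show "t \<in> SR (\<lambda>b. cond f (x, False) b \<and> cond f (x, True) b) a"
    using prime_implicant_iff_prime_implicant_forall[OF free] prime sat by (simp add: SR_def)
next
  fix t assume "t \<in> SR (\<lambda>b. cond f (x, False) b \<and> cond f (x, True) b) a"
  then have prime: "prime_implicant t (\<lambda>b. cond f (x, False) b \<and> cond f (x, True) b)"
    and sat: "sat_term a t" by (auto simp: SR_def)
  have free: "x \<notin> fst ` t"
    using prime sat depends_only_conj[OF depends_only_cond depends_only_cond]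
    by (rule prime_implicant_var_free)
  then have "(x, s) \<notin> t" by force
  with prime sat show "t \<in> {t \<in> SR f a. (x, s) \<notin> t}"
    using prime_implicant_iff_prime_implicant_forall[OF free] by (simp add: SR_def)
qed

theorem proposition15:
  fixes f :: "'v boolfun" and V :: "'v set" and a :: "'v assignment"
    and x :: 'v and l :: "'v literal"
  assumes "finite V" and "depends_only f V"
    and "x \<in> V"
    and "l \<in> {(x, True), (x, False)}" and "sat_lit a l"
  shows "SR f a =
    {insert l t | t. t \<in> SR (cond f l) a \<and> \<not> implicant t (cond f (lit_neg l))}
    \<union> SR (\<lambda>b. cond f (x, False) b \<and> cond f (x, True) b) a"
proof -
  obtain s where l: "l = (x, s)" using \<open>l \<in> {(x, True), (x, False)}\<close> by auto
  with \<open>sat_lit a l\<close> have sat: "sat_lit a (x, s)" by simp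
  have "SR f a = {t \<in> SR f a. (x, s) \<in> t} \<union> {t \<in> SR f a. (x, s) \<notin> t}" by blast
  also have "\<dots> = {insert (x, s) t | t. t \<in> SR (cond f (x, s)) a
      \<and> \<not> implicant t (cond f (x, \<not> s))}
    \<union> SR (\<lambda>b. cond f (x, False) b \<and> cond f (x, True) b) a"
    unfolding SR_with_lit[OF sat] SR_without_lit[OF sat] ..
  finally show ?thesis by (simp add: l lit_neg_def)
qed

end
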